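(* Let $\gamma\ge1$, $n\in\mathbb{N}^*$, $\lambda_n=\lambda_{n,\gamma}$ and $x_n=\big(\lambda_n/(n\pi)^2\big)^{1/(2\gamma)}$, and assume $x_n<1$. Define $$\mu_n=\min\Big\{\frac{n\pi}{\gamma+1},\ \frac{\gamma}{\gamma+1}\Big(\frac{(n\pi)^2}{\lambda_n}\Big)^{\frac12+\frac1{2\gamma}}\Big\},\qquad C_n=\frac{2\lambda_ne^{\mu_nx_n^{\gamma+1}}}{(\gamma+1)\mu_nx_n^{\gamma-\frac12}},\qquad W_n(x)=C_ne^{-\mu_nx^{\gamma+1}}.$$ Then $W_n$ satisfies $-W_n''(x)+[(n\pi)^2x^{2\gamma}-\lambda_n]W_n(x)\ge0$ for all $x\in(x_n,1)$, $W_n(1)\ge0$, and $W_n'(x_n)<-\sqrt{x_n}\,\lambda_n$.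
   Context: $\lambda_{n,\gamma}$ is the smallest eigenvalue of the operator $A_{n,\gamma}\varphi=-\varphi''+(n\pi)^2|x|^{2\gamma}\varphi$ with domain $H^2(-1,1)\cap H^1_0(-1,1)$ (in particular $\lambda_n>0$). *)

theory Defs
  imports "HOL-Analysis.Analysis"
begin

text \<open>Eigenvalue of A_{n,gamma} phi = -phi'' + (n pi)^2 |x|^(2 gamma) phi on (-1,1)
  with Dirichlet boundary conditions phi(-1) = phi(1) = 0.  Eigenfunctions are taken
  to be C^2 on [-1,1]; since the potential is continuous, every H^2 cap H^1_0
  eigenfunction is C^2 (the equation gives phi'' = (q - lambda) phi continuous),
  so this is the same set of eigenvalues.\<close>

definition is_eigenvalue :: "real \<Rightarrow> nat \<Rightarrow> real \<Rightarrow> bool" where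
  "is_eigenvalue \<gamma> n l \<longleftrightarrow>
     (\<exists>\<phi> \<phi>' \<phi>''. (\<forall>x\<in>{-1..1}. (\<phi> has_real_derivative \<phi>' x) (at x within {-1..1}))
        \<and> (\<forall>x\<in>{-1..1}. (\<phi>' has_real_derivative \<phi>'' x) (at x within {-1..1}))
        \<and> continuous_on {-1..1} \<phi>''
        \<and> \<phi> (-1) = 0 \<and> \<phi> 1 = 0
        \<and> (\<exists>x\<in>{-1..1}. \<phi> x \<noteq> 0)
        \<and> (\<forall>x\<in>{-1..1}. - \<phi>'' x + (real n * pi)^2 * (\<bar>x\<bar> powr (2 * \<gamma>)) * \<phi> x = l * \<phi> x))"

definition lam :: "real \<Rightarrow> nat \<Rightarrow> real" where
  "lam \<gamma> n = (THE l. is_eigenvalue \<gamma> n l \<and> (\<forall>m. is_eigenvalue \<gamma> n m \<longrightarrow> l \<le> m))"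

end

theory Submission
  imports Defs
begin

text \<open>For \<open>l \<in> [0, lmax]\<close> let \<open>Phi l\<close> solve \<open>\<phi>'' = (q - l) \<phi>\<close>, \<open>\<phi>(-1) = 0\<close>, \<open>\<phi>'(-1) = 1\<close>
  (constructed by Picard iteration), where \<open>q x = (n \<pi>)^2 |x|^(2 \<gamma>)\<close>. Gronwall estimates make
  \<open>Phi l\<close> bounded and Lipschitz in \<open>l\<close>. The least \<open>l1\<close> for which \<open>Phi l1\<close> has a zero in
  \<open>(-1, 1]\<close> is positive (\<open>Phi 0\<close> is increasing because \<open>q \<ge> 0\<close>), and \<open>Phi l1\<close> is positive
  inside and vanishes at \<open>1\<close>. So \<open>l1\<close> is an eigenvalue, by Sturm comparison with its positive
  eigenfunction it is the least one, and \<open>\<lambda>\<^sub>n = l1 > 0\<close>.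

  With \<open>s = (\<gamma> + 1) \<mu>\<^sub>n\<close>,
  \<open>-W'' + ((n \<pi>)^2 x^(2 \<gamma>) - \<lambda>\<^sub>n) W = W (((n \<pi>)^2 - s^2) x^(2 \<gamma>) + s \<gamma> x^(\<gamma> - 1) - \<lambda>\<^sub>n)\<close>;
  the bracket is nondecreasing in \<open>x\<close> because \<open>s \<le> n \<pi>\<close>, and at \<open>x\<^sub>n\<close> it equals
  \<open>s x\<^sub>n^(\<gamma> - 1) (\<gamma> - s x\<^sub>n^(\<gamma> + 1)) \<ge> 0\<close> by the second bound in \<open>\<mu>\<^sub>n\<close>.
  The constant \<open>C\<^sub>n\<close> is chosen so that \<open>W'(x\<^sub>n) = -2 \<lambda>\<^sub>n \<surd>x\<^sub>n\<close>.\<close>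

lemma nondecreasing_of_deriv_nonneg_within:
  fixes f :: "real \<Rightarrow> real"
  assumes deriv: "\<And>z. z \<in> {a..b} \<Longrightarrow> (f has_real_derivative f' z) (at z within S)"
    and S: "{a..b} \<subseteq> S" and nonneg: "\<And>z. z \<in> {a..b} \<Longrightarrow> f' z \<ge> 0"
    and xy: "a \<le> x" "x \<le> y" "y \<le> b"
  shows "f x \<le> f y"
proof (rule DERIV_nonneg_imp_increasing_open[OF xy(2)])
  fix z assume z: "x < z" "z < y"
  then have "z \<in> interior S"
    using interior_mono[OF S] xy by auto
  then have "(f has_real_derivative f' z) (at z)"
    using deriv[of z] z xy at_within_interior by fastforce
  then show "\<exists>d. (f has_real_derivative d) (at z) \<and> 0 \<le> d"
    using nonneg[of z] z xy by auto
next
  have "(f has_real_derivative f' z) (at z within {x..y})" if "z \<in> {x..y}" for z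
    by (rule has_field_derivative_subset[OF deriv]) (use that xy S in auto)
  then show "continuous_on {x..y} f"
    by (rule DERIV_continuous_on)
qed

lemma has_real_derivative_at_of_within_Icc:
  assumes "(f has_real_derivative D) (at z within {a..b})" "a < z" "z < b"
  shows "(f has_real_derivative D) (at z)"
  using assms at_within_interior[of z "{a..b}"] by simp

lemma gronwall_affine:
  fixes E :: "real \<Rightarrow> real"
  assumes K: "K > 0" and c: "c \<ge> 0"
    and deriv: "\<And>z. z \<in> {a..b} \<Longrightarrow> (E has_real_derivative E' z) (at z within {a..b})"
    and growth: "\<And>z. z \<in> {a..b} \<Longrightarrow> E' z \<le> K * E z + c"
    and x: "x \<in> {a..b}"
  shows "E x + c/K \<le> (E a + c/K) * exp (K * (x - a))"
proof -
  define h where "h y = - ((E y + c/K) * exp (- K * (y - a)))" for y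
  have "(h has_real_derivative exp (- K * (z - a)) * (K * E z + c - E' z)) (at z within {a..b})"
    if "z \<in> {a..b}" for z
    unfolding h_def
    by (rule derivative_eq_intros deriv[OF that] refl | simp)+ (use K in \<open>simp add: field_simps\<close>)
  then have "h a \<le> h x"
    by (rule nondecreasing_of_deriv_nonneg_within) (use x growth in \<open>auto intro!: mult_nonneg_nonneg\<close>)
  then have "(E x + c/K) * exp (- K * (x - a)) * exp (K * (x - a)) \<le> (E a + c/K) * exp (K * (x - a))"
    unfolding h_def by (intro mult_right_mono) auto
  moreover have "exp (- K * (x - a)) * exp (K * (x - a)) = 1"
    by (simp add: exp_add[symmetric])
  ultimately show ?thesis
    by (simp only: mult.assoc mult_1_right)
qed

lemma gronwall_zero_backward:
  fixes E :: "real \<Rightarrow> real"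
  assumes deriv: "\<And>z. z \<in> {a..b} \<Longrightarrow> (E has_real_derivative E' z) (at z within {a..b})"
    and growth: "\<And>z. z \<in> {a..b} \<Longrightarrow> E' z \<ge> - K * E z"
    and x0: "x0 \<in> {a..b}" "E x0 = 0" and x: "a \<le> x" "x \<le> x0"
  shows "E x \<le> 0"
proof -
  define h where "h y = E y * exp (K * y)" for y
  have "(h has_real_derivative exp (K * z) * (E' z + K * E z)) (at z within {a..b})"
    if "z \<in> {a..b}" for z
    unfolding h_def
    by (rule derivative_eq_intros deriv[OF that] refl | simp)+ (simp add: field_simps)
  then have "h x \<le> h x0"
  proof (rule nondecreasing_of_deriv_nonneg_within)
    show "0 \<le> exp (K * z) * (E' z + K * E z)" if "z \<in> {a..b}" for z
      using growth[OF that] by simp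
  qed (use x x0 in auto)
  then show ?thesis
    unfolding h_def using x0 by (simp add: mult_le_0_iff)
qed

lemma two_mult_le_sum_squares:
  fixes u w :: real
  shows "2 * u * w \<le> u^2 + w^2"
  using sum_squares_ge_zero[of "u - w" 0] by (simp add: power2_eq_square algebra_simps)

lemma abs_two_mult_mult_le:
  fixes m M u w :: real
  assumes "\<bar>m\<bar> \<le> M"
  shows "\<bar>2 * m * u * w\<bar> \<le> M * (u^2 + w^2)"
proof -
  have "\<bar>2 * m * u * w\<bar> = \<bar>m\<bar> * (2 * \<bar>u\<bar> * \<bar>w\<bar>)"
    by (simp add: abs_mult)
  also have "\<dots> \<le> M * (u^2 + w^2)"
  proof (rule mult_mono)
    show "2 * \<bar>u\<bar> * \<bar>w\<bar> \<le> u^2 + w^2"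
      using two_mult_le_sum_squares[of "\<bar>u\<bar>" "\<bar>w\<bar>"] by simp
  qed (use assms in auto)
  finally show ?thesis .
qed

lemma first_zero:
  fixes f :: "real \<Rightarrow> real"
  assumes cont: "continuous_on {a..b} f" and "a \<le> b" and "f a > 0" and "f b \<le> 0"
  shows "\<exists>z\<in>{a..b}. f z = 0 \<and> (\<forall>y\<in>{a..<z}. f y > 0)"
proof -
  define Z where "Z = {x\<in>{a..b}. f x = 0}"
  have "Z \<noteq> {}"
    using IVT2'[of f b 0 a, OF \<open>f b \<le> 0\<close> _ \<open>a \<le> b\<close> cont] \<open>f a > 0\<close> unfolding Z_def by force
  have "closed Z"
    unfolding Z_def by (rule continuous_closed_preimage_constant[OF cont closed_atLeastAtMost])
  then have "compact ({a..b} \<inter> Z)"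
    by (rule compact_Int_closed[OF compact_Icc])
  moreover have "{a..b} \<inter> Z = Z"
    unfolding Z_def by auto
  ultimately obtain z where z: "z \<in> Z" "\<forall>t\<in>Z. z \<le> t"
    using compact_attains_inf[OF _ \<open>Z \<noteq> {}\<close>] by auto
  have "\<forall>y\<in>{a..<z}. f y > 0"
  proof (rule ccontr)
    assume "\<not> ?thesis"
    then obtain y where y: "y \<in> {a..<z}" "f y \<le> 0"
      by force
    have "continuous_on {a..y} f"
      by (rule continuous_on_subset[OF cont]) (use y z in \<open>auto simp: Z_def\<close>)
    then obtain w where w: "a \<le> w" "w \<le> y" "f w = 0"
      using IVT2'[of f y 0 a, OF y(2)] \<open>f a > 0\<close> y by force
    then have "w \<in> Z"
      using y z unfolding Z_def by auto
    then show False
      using z w y by force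
  qed
  then show ?thesis
    using z unfolding Z_def by blast
qed

lemma last_zero:
  fixes f :: "real \<Rightarrow> real"
  assumes cont: "continuous_on {a..b} f" and "a \<le> b" and "f a \<le> 0" and "f b > 0"
  shows "\<exists>z\<in>{a..b}. f z = 0 \<and> (\<forall>y\<in>{z<..b}. f y > 0)"
proof -
  have "continuous_on {-b..-a} (\<lambda>x. f (- x))"
    by (rule continuous_on_compose2[OF cont]) (auto intro!: continuous_intros)
  then obtain z where z: "z \<in> {-b..-a}" "f (- z) = 0" "\<forall>y\<in>{-b..<z}. f (- y) > 0"
    using first_zero[of "-b" "-a" "\<lambda>x. f (- x)"] assms by force
  show ?thesis
  proof (rule bexI[of _ "- z"], intro conjI ballI)
    fix y
    assume "y \<in> {-z<..b}"
    then have "- y \<in> {-b..<z}"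
      by auto
    then show "f y > 0"
      using z(3) by (metis minus_minus)
  qed (use z in auto)
qed

lemma continuous_on_integral_upto:
  fixes g :: "real \<Rightarrow> real"
  assumes "continuous_on {-1..1} g"
  shows "continuous_on {-1..1} (\<lambda>s. integral {-1..s} g)"
  by (rule indefinite_integral_continuous_1) (simp add: assms integrable_continuous_real)

text \<open>Fixed points of \<open>picard_step p\<close> are the solutions of \<open>\<phi>'' = p \<phi>\<close>, \<open>\<phi>(-1) = 0\<close>,
  \<open>\<phi>'(-1) = 1\<close> on \<open>[-1,1]\<close>.\<close>

definition picard_step :: "(real \<Rightarrow> real) \<Rightarrow> (real \<Rightarrow> real) \<Rightarrow> real \<Rightarrow> real" where
  "picard_step p f x = (x + 1) + integral {-1..x} (\<lambda>s. integral {-1..s} (\<lambda>t. p t * f t))"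

fun picard_iterate :: "(real \<Rightarrow> real) \<Rightarrow> nat \<Rightarrow> real \<Rightarrow> real" where
  "picard_iterate p 0 = (\<lambda>x. 0)"
| "picard_iterate p (Suc k) = picard_step p (picard_iterate p k)"

lemma picard_step_continuous_on:
  assumes "continuous_on {-1..1} p" "continuous_on {-1..1} f"
  shows "continuous_on {-1..1} (picard_step p f)"
  unfolding picard_step_def
  using assms by (intro continuous_intros continuous_on_integral_upto)

lemma picard_iterate_continuous_on:
  "continuous_on {-1..1} p \<Longrightarrow> continuous_on {-1..1} (picard_iterate p k)"
  by (induction k) (auto intro: picard_step_continuous_on)

lemma has_integral_shifted_power:
  assumes "-1 \<le> s"
  shows "((\<lambda>t. (t + 1)^k) has_integral (s + 1)^(k + 1) / (k + 1)) {-1..s}"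
proof -
  have "((\<lambda>t. (t + 1)^(Suc k) / Suc k) has_real_derivative (t + 1)^k) (at t within {-1..s})" for t
    by (rule derivative_eq_intros refl | simp del: of_nat_Suc)+
  then have "((\<lambda>t. (t + 1)^k) has_integral (s + 1)^(Suc k) / Suc k - (-1 + 1)^(Suc k) / Suc k) {-1..s}"
    by (intro fundamental_theorem_of_calculus[OF assms]) (simp add: has_real_derivative_iff_has_vector_derivative)
  then show ?thesis
    by simp
qed

lemma abs_integral_le_shifted_power:
  assumes g: "continuous_on {-1..1} g" and s: "s \<in> {-1..1}"
    and bound: "\<And>t. t \<in> {-1..1} \<Longrightarrow> \<bar>g t\<bar> \<le> c * (t + 1)^k"
  shows "\<bar>integral {-1..s} g\<bar> \<le> c * (s + 1)^(k + 1) / (k + 1)"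
proof -
  have sub: "{-1..s} \<subseteq> {-1..1}"
    using s by auto
  have "norm (integral {-1..s} g) \<le> integral {-1..s} (\<lambda>t. c * (t + 1)^k)"
    using bound sub
    by (intro integral_norm_bound_integral integrable_continuous_real continuous_on_subset[OF g sub])
      (auto intro!: continuous_intros)
  also have "\<dots> = c * ((s + 1)^(k + 1) / (k + 1))"
    using has_integral_shifted_power[of s k] s by (simp add: integral_mult_right integral_unique)
  finally show ?thesis
    by simp
qed

lemma picard_step_diff_bound:
  assumes p: "continuous_on {-1..1} p" and f: "continuous_on {-1..1} f" and g: "continuous_on {-1..1} g"
    and M: "\<And>t. t \<in> {-1..1} \<Longrightarrow> \<bar>p t\<bar> \<le> M"
    and bound: "\<And>t. t \<in> {-1..1} \<Longrightarrow> \<bar>f t - g t\<bar> \<le> c * (t + 1)^k"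
    and x: "x \<in> {-1..1}"
  shows "\<bar>picard_step p f x - picard_step p g x\<bar> \<le> M * c * (x + 1)^(k + 2) / ((k + 1) * (k + 2))"
proof -
  define h where "h t = p t * (f t - g t)" for t
  have h: "continuous_on {-1..1} h"
    unfolding h_def using p f g by (intro continuous_intros)
  have pf: "continuous_on {-1..1} (\<lambda>t. p t * f t)" and pg: "continuous_on {-1..1} (\<lambda>t. p t * g t)"
    using p f g by (auto intro!: continuous_intros)
  have inner: "integral {-1..s} (\<lambda>t. p t * f t) - integral {-1..s} (\<lambda>t. p t * g t) = integral {-1..s} h"
    if "s \<in> {-1..1}" for s
  proof -
    have "{-1..s} \<subseteq> {-1..1}"
      using that by auto
    then show ?thesis
      unfolding h_def right_diff_distrib
      by (intro integral_diff[symmetric] integrable_continuous_real continuous_on_subset[OF pf]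
          continuous_on_subset[OF pg])
  qed
  have sub: "{-1..x} \<subseteq> {-1..1}"
    using x by auto
  have "picard_step p f x - picard_step p g x
      = integral {-1..x} (\<lambda>s. integral {-1..s} (\<lambda>t. p t * f t) - integral {-1..s} (\<lambda>t. p t * g t))"
    unfolding picard_step_def
    by (simp, intro integral_diff[symmetric] integrable_continuous_real continuous_on_subset[OF _ sub]
        continuous_on_integral_upto pf pg)
  also have "\<dots> = integral {-1..x} (\<lambda>s. integral {-1..s} h)"
    by (rule integral_cong) (use inner sub in auto)
  finally have eq: "picard_step p f x - picard_step p g x = integral {-1..x} (\<lambda>s. integral {-1..s} h)" .
  have "\<bar>h t\<bar> \<le> (M * c) * (t + 1)^k" if "t \<in> {-1..1}" for t
  proof -
    have "\<bar>h t\<bar> = \<bar>p t\<bar> * \<bar>f t - g t\<bar>"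
      unfolding h_def by (simp add: abs_mult)
    also have "\<dots> \<le> M * (c * (t + 1)^k)"
      by (rule mult_mono) (use M[OF that] bound[OF that] in auto)
    finally show ?thesis
      by simp
  qed
  then have "\<bar>integral {-1..s} h\<bar> \<le> (M * c / (k + 1)) * (s + 1)^(k + 1)" if "s \<in> {-1..1}" for s
    using abs_integral_le_shifted_power[OF h that, of "M * c" k] by (simp add: field_simps)
  then have "\<bar>integral {-1..x} (\<lambda>s. integral {-1..s} h)\<bar> \<le> (M * c / (k + 1)) * (x + 1)^(k + 1 + 1) / (k + 1 + 1)"
    by (rule abs_integral_le_shifted_power[OF continuous_on_integral_upto[OF h] x])
  then show ?thesis
    unfolding eq by (simp add: field_simps)
qed

lemma picard_iterate_diff_bound:
  assumes p: "continuous_on {-1..1} p" and M: "\<And>t. t \<in> {-1..1} \<Longrightarrow> \<bar>p t\<bar> \<le> M"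
    and x: "x \<in> {-1..1}"
  shows "\<bar>picard_iterate p (Suc k) x - picard_iterate p k x\<bar> \<le> M^k / fact (2 * k + 1) * (x + 1)^(2 * k + 1)"
  using x
proof (induction k arbitrary: x)
  case 0
  then show ?case
    by (simp add: picard_step_def)
next
  case (Suc k)
  have "\<bar>picard_step p (picard_iterate p (Suc k)) x - picard_step p (picard_iterate p k) x\<bar>
      \<le> M * (M^k / fact (2 * k + 1)) * (x + 1)^(2 * k + 1 + 2) / ((2 * k + 1 + 1) * (2 * k + 1 + 2))"
    using Suc
    by (intro picard_step_diff_bound[OF p picard_iterate_continuous_on[OF p] picard_iterate_continuous_on[OF p] M])
      auto
  also have "\<dots> = M^Suc k / fact (2 * Suc k + 1) * (x + 1)^(2 * Suc k + 1)"
  proof -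
    have "fact (2 * Suc k + 1) = (real (2 * k + 2) * real (2 * k + 3)) * (fact (2 * k + 1) :: real)"
      by (simp add: fact_Suc algebra_simps)
    then show ?thesis
      by (simp add: field_simps)
  qed
  finally show ?case
    by simp
qed

lemma picard_iterate_uniform_limit:
  assumes p: "continuous_on {-1..1} p"
  obtains \<phi> where "uniform_limit {-1..1} (picard_iterate p) \<phi> sequentially"
proof -
  obtain M where M0: "M \<ge> 0" and M: "\<And>t. t \<in> {-1..1} \<Longrightarrow> \<bar>p t\<bar> \<le> M"
    using continuous_on_compact_bound[OF compact_Icc p] by auto
  define d where "d j x = picard_iterate p (Suc j) x - picard_iterate p j x" for j x
  have bound: "\<bar>d j x\<bar> \<le> 2 * (inverse (fact j) * (4 * M)^j)" if x: "x \<in> {-1..1}" for j x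
  proof -
    have "\<bar>d j x\<bar> \<le> M^j / fact (2 * j + 1) * (x + 1)^(2 * j + 1)"
      unfolding d_def by (rule picard_iterate_diff_bound[OF p M x])
    also have "\<dots> \<le> M^j / fact j * 2^(2 * j + 1)"
    proof (rule mult_mono)
      show "M^j / fact (2 * j + 1) \<le> M^j / fact j"
        using M0 by (intro divide_left_mono fact_mono) (auto simp del: fact_Suc)
      show "(x + 1)^(2 * j + 1) \<le> 2^(2 * j + 1)"
        by (rule power_mono) (use x in auto)
    qed (use x M0 in auto)
    also have "\<dots> = 2 * (inverse (fact j) * (4 * M)^j)"
      using power_mult[of "2::real" 2 j] by (simp add: power_mult_distrib field_simps)
    finally show ?thesis .
  qed
  have "summable (\<lambda>j. 2 * (inverse (fact j) * (4 * M)^j))"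
    by (intro summable_mult summable_exp)
  then have "uniform_limit {-1..1} (\<lambda>k x. \<Sum>j<k. d j x) (\<lambda>x. \<Sum>j. d j x) sequentially"
    by (rule Weierstrass_m_test[rotated]) (use bound in auto)
  moreover have "(\<lambda>k x. \<Sum>j<k. d j x) = picard_iterate p"
    unfolding d_def
  proof (intro ext)
    show "(\<Sum>j<k. picard_iterate p (Suc j) x - picard_iterate p j x) = picard_iterate p k x" for k x
      using sum_lessThan_telescope[of "\<lambda>j. picard_iterate p j x" k] by simp
  qed
  ultimately show ?thesis
    using that by simp
qed

lemma picard_step_fixpoint_of_uniform_limit:
  assumes p: "continuous_on {-1..1} p"
    and lim: "uniform_limit {-1..1} (picard_iterate p) \<phi> sequentially"
    and x: "x \<in> {-1..1}"
  shows "picard_step p \<phi> x = \<phi> x"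
proof -
  obtain M where M0: "M \<ge> 0" and M: "\<And>t. t \<in> {-1..1} \<Longrightarrow> \<bar>p t\<bar> \<le> M"
    using continuous_on_compact_bound[OF compact_Icc p] by auto
  have \<phi>: "continuous_on {-1..1} \<phi>"
    by (rule uniform_limit_theorem[OF _ lim]) (auto intro!: always_eventually picard_iterate_continuous_on[OF p])
  have "(\<lambda>k. picard_step p (picard_iterate p k) x) \<longlonglongrightarrow> picard_step p \<phi> x"
  proof (rule tendstoI)
    fix e :: real
    assume "e > 0"
    define e' where "e' = e / (4 * M + 1)"
    have "e' > 0"
      using \<open>e > 0\<close> M0 unfolding e'_def by simp
    then have "\<forall>\<^sub>F k in sequentially. \<forall>t\<in>{-1..1}. dist (picard_iterate p k t) (\<phi> t) < e'"
      using lim unfolding uniform_limit_iff by blast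
    then show "\<forall>\<^sub>F k in sequentially. dist (picard_step p (picard_iterate p k) x) (picard_step p \<phi> x) < e"
    proof eventually_elim
      case (elim k)
      have "\<bar>picard_step p (picard_iterate p k) x - picard_step p \<phi> x\<bar>
          \<le> M * e' * (x + 1)^(0 + 2) / real ((0 + 1) * (0 + 2))"
        by (rule picard_step_diff_bound[OF p picard_iterate_continuous_on[OF p] \<phi> M _ x])
          (use elim \<open>e' > 0\<close> in \<open>auto simp: dist_real_def less_imp_le\<close>)
      also have "\<dots> \<le> M * e' * 2"
      proof -
        have "(x + 1)^2 \<le> 4"
          using power_mono[of "x + 1" 2 2] x by simp
        then have "M * e' * (x + 1)^2 \<le> M * e' * 4"
          by (rule mult_left_mono) (use M0 \<open>e' > 0\<close> in simp)
        then show ?thesis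
          by (simp add: power2_eq_square mult.commute)
      qed
      also have "\<dots> < e"
        using \<open>e > 0\<close> M0 unfolding e'_def by (simp add: field_simps add_pos_nonneg)
      finally show ?case
        by (simp add: dist_real_def)
    qed
  qed
  moreover have "(\<lambda>k. picard_step p (picard_iterate p k) x) \<longlonglongrightarrow> \<phi> x"
    using LIMSEQ_Suc[OF tendsto_uniform_limitI[OF lim x]] by simp
  ultimately show ?thesis
    by (rule LIMSEQ_unique)
qed

definition shooting_solution :: "(real \<Rightarrow> real) \<Rightarrow> (real \<Rightarrow> real) \<Rightarrow> (real \<Rightarrow> real) \<Rightarrow> bool" where
  "shooting_solution p \<phi> \<psi> \<longleftrightarrow> \<phi> (-1) = 0 \<and> \<psi> (-1) = 1 \<and>
     (\<forall>x\<in>{-1..1}. (\<phi> has_real_derivative \<psi> x) (at x within {-1..1}) \<and>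
        (\<psi> has_real_derivative p x * \<phi> x) (at x within {-1..1}))"

lemma shooting_solution_of_picard_fixpoint:
  assumes p: "continuous_on {-1..1} p" and \<phi>: "continuous_on {-1..1} \<phi>"
    and fixpoint: "\<And>x. x \<in> {-1..1} \<Longrightarrow> picard_step p \<phi> x = \<phi> x"
  shows "shooting_solution p \<phi> (\<lambda>x. 1 + integral {-1..x} (\<lambda>t. p t * \<phi> t))"
  unfolding shooting_solution_def
proof (intro conjI ballI)
  define G where "G s = integral {-1..s} (\<lambda>t. p t * \<phi> t)" for s
  have G: "continuous_on {-1..1} G"
    unfolding G_def using p \<phi> by (intro continuous_on_integral_upto continuous_intros)
  show "\<phi> (-1) = 0"
    using fixpoint[of "-1"] by (simp add: picard_step_def)
  show "1 + integral {-1..-1} (\<lambda>t. p t * \<phi> t) = 1"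
    by simp
  fix x :: real
  assume x: "x \<in> {-1..1}"
  have "(picard_step p \<phi> has_real_derivative 1 + G x) (at x within {-1..1})"
    unfolding picard_step_def G_def[symmetric]
    by (rule derivative_eq_intros integral_has_real_derivative[OF G x] | simp)+
  then show "(\<phi> has_real_derivative 1 + integral {-1..x} (\<lambda>t. p t * \<phi> t)) (at x within {-1..1})"
    unfolding G_def by (rule has_field_derivative_transform_within[where d=1]) (use x fixpoint in auto)
  have "(G has_real_derivative p x * \<phi> x) (at x within {-1..1})"
    unfolding G_def using p \<phi> by (intro integral_has_real_derivative[OF _ x] continuous_intros)
  then show "((\<lambda>x. 1 + integral {-1..x} (\<lambda>t. p t * \<phi> t)) has_real_derivative p x * \<phi> x) (at x within {-1..1})"
    using DERIV_add[OF DERIV_const[of 1]] unfolding G_def by simp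
qed

lemma shooting_solution_exists:
  assumes p: "continuous_on {-1..1} p"
  shows "\<exists>\<phi> \<psi>. shooting_solution p \<phi> \<psi>"
proof -
  obtain \<phi> where lim: "uniform_limit {-1..1} (picard_iterate p) \<phi> sequentially"
    using picard_iterate_uniform_limit[OF p] .
  have "continuous_on {-1..1} \<phi>"
    by (rule uniform_limit_theorem[OF _ lim]) (auto intro!: always_eventually picard_iterate_continuous_on[OF p])
  then show ?thesis
    using shooting_solution_of_picard_fixpoint[OF p _ picard_step_fixpoint_of_uniform_limit[OF p lim]] by blast
qed

lemma shooting_energy_has_derivative:
  assumes "shooting_solution p \<phi> \<psi>" and "z \<in> {-1..1}"
  shows "((\<lambda>x. (\<phi> x)^2 + (\<psi> x)^2) has_real_derivative 2 * \<phi> z * \<psi> z + 2 * p z * \<psi> z * \<phi> z)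
           (at z within {-1..1})"
proof -
  have "(\<phi> has_real_derivative \<psi> z) (at z within {-1..1})"
    and "(\<psi> has_real_derivative p z * \<phi> z) (at z within {-1..1})"
    using assms unfolding shooting_solution_def by auto
  then show ?thesis
    by (auto intro!: derivative_eq_intros simp: algebra_simps)
qed

lemma shooting_solution_bound:
  assumes sol: "shooting_solution p \<phi> \<psi>" and M: "\<And>t. t \<in> {-1..1} \<Longrightarrow> \<bar>p t\<bar> \<le> M"
    and x: "x \<in> {-1..1}"
  shows "\<bar>\<phi> x\<bar> \<le> exp (1 + M)" "\<bar>\<psi> x\<bar> \<le> exp (1 + M)"
proof -
  have M0: "M \<ge> 0"
    using M[of 0] by simp
  define E where "E x = (\<phi> x)^2 + (\<psi> x)^2" for x
  have "E x + 0 / (1 + M) \<le> (E (-1) + 0 / (1 + M)) * exp ((1 + M) * (x - -1))"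
  proof (rule gronwall_affine[where E' = "\<lambda>z. 2 * \<phi> z * \<psi> z + 2 * p z * \<psi> z * \<phi> z"])
    fix z :: real
    assume z: "z \<in> {-1..1}"
    show "(E has_real_derivative 2 * \<phi> z * \<psi> z + 2 * p z * \<psi> z * \<phi> z) (at z within {-1..1})"
      unfolding E_def by (rule shooting_energy_has_derivative[OF sol z])
    show "2 * \<phi> z * \<psi> z + 2 * p z * \<psi> z * \<phi> z \<le> (1 + M) * E z + 0"
      using two_mult_le_sum_squares[of "\<phi> z" "\<psi> z"] abs_two_mult_mult_le[OF M[OF z], of "\<psi> z" "\<phi> z"]
      unfolding E_def by (simp add: algebra_simps abs_le_iff)
  qed (use x M0 in auto)
  moreover have "E (-1) = 1"
    using sol unfolding shooting_solution_def E_def by simp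
  ultimately have "E x \<le> exp ((1 + M) * (x + 1))"
    by simp
  also have "\<dots> \<le> exp ((1 + M) * 2)"
    using x M0 by (intro exp_le_cancel_iff[THEN iffD2] mult_left_mono) auto
  also have "\<dots> = (exp (1 + M))^2"
    by (simp add: power2_eq_square exp_add[symmetric] algebra_simps)
  finally have "(\<phi> x)^2 \<le> (exp (1 + M))^2" "(\<psi> x)^2 \<le> (exp (1 + M))^2"
    unfolding E_def using zero_le_power2[of "\<phi> x"] zero_le_power2[of "\<psi> x"] by linarith+
  then show "\<bar>\<phi> x\<bar> \<le> exp (1 + M)" "\<bar>\<psi> x\<bar> \<le> exp (1 + M)"
    by (auto simp: abs_le_square_iff[symmetric])
qed

lemma shooting_solution_no_double_zero:
  assumes sol: "shooting_solution p \<phi> \<psi>" and M: "\<And>t. t \<in> {-1..1} \<Longrightarrow> \<bar>p t\<bar> \<le> M"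
    and x0: "x0 \<in> {-1..1}"
  shows "\<phi> x0 \<noteq> 0 \<or> \<psi> x0 \<noteq> 0"
proof (rule ccontr)
  assume "\<not> (\<phi> x0 \<noteq> 0 \<or> \<psi> x0 \<noteq> 0)"
  then have zero: "\<phi> x0 = 0" "\<psi> x0 = 0"
    by auto
  define E where "E x = (\<phi> x)^2 + (\<psi> x)^2" for x
  define E' where "E' z = 2 * \<phi> z * \<psi> z + 2 * p z * \<psi> z * \<phi> z" for z
  have "E (-1) \<le> 0"
  proof (rule gronwall_zero_backward[of "-1" 1 E E' "1 + M" x0])
    fix z :: real
    assume z: "z \<in> {-1..1}"
    show "(E has_real_derivative E' z) (at z within {-1..1})"
      unfolding E_def E'_def by (rule shooting_energy_has_derivative[OF sol z])
    show "E' z \<ge> - (1 + M) * E z"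
      using two_mult_le_sum_squares[of "- \<phi> z" "\<psi> z"] abs_two_mult_mult_le[OF M[OF z], of "\<psi> z" "\<phi> z"]
      unfolding E_def E'_def by (simp add: algebra_simps abs_le_iff)
  qed (use x0 zero in \<open>auto simp: E_def\<close>)
  moreover have "E (-1) = 1"
    using sol unfolding shooting_solution_def E_def by simp
  ultimately show False
    by simp
qed

lemma shooting_solution_diff_bound:
  assumes sol1: "shooting_solution p1 \<phi>1 \<psi>1" and sol2: "shooting_solution p2 \<phi>2 \<psi>2"
    and M: "\<And>t. t \<in> {-1..1} \<Longrightarrow> \<bar>p1 t\<bar> \<le> M"
    and B: "\<And>t. t \<in> {-1..1} \<Longrightarrow> \<bar>\<phi>2 t\<bar> \<le> B"
    and shift: "\<And>t. t \<in> {-1..1} \<Longrightarrow> p1 t - p2 t = r"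
    and x: "x \<in> {-1..1}"
  shows "\<bar>\<phi>1 x - \<phi>2 x\<bar> \<le> \<bar>r\<bar> * B * exp (2 + M)"
proof -
  have M0: "M \<ge> 0" and B0: "B \<ge> 0"
    using M[of 0] B[of 0] by auto
  define K where "K = 2 + M"
  define c where "c = r^2 * B^2"
  have K: "K > 0" "K \<ge> 1" and c: "c \<ge> 0"
    unfolding K_def c_def using M0 by auto
  define E where "E x = (\<phi>1 x - \<phi>2 x)^2 + (\<psi>1 x - \<psi>2 x)^2" for x
  define E' where "E' z = 2 * (\<phi>1 z - \<phi>2 z) * (\<psi>1 z - \<psi>2 z)
      + 2 * (\<psi>1 z - \<psi>2 z) * (p1 z * \<phi>1 z - p2 z * \<phi>2 z)" for z
  have "E x + c/K \<le> (E (-1) + c/K) * exp (K * (x - -1))"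
  proof (rule gronwall_affine[where E' = E', OF K(1) c])
    fix z :: real
    assume z: "z \<in> {-1..1}"
    have "(\<phi>1 has_real_derivative \<psi>1 z) (at z within {-1..1})"
      "(\<psi>1 has_real_derivative p1 z * \<phi>1 z) (at z within {-1..1})"
      "(\<phi>2 has_real_derivative \<psi>2 z) (at z within {-1..1})"
      "(\<psi>2 has_real_derivative p2 z * \<phi>2 z) (at z within {-1..1})"
      using sol1 sol2 z unfolding shooting_solution_def by auto
    then show "(E has_real_derivative E' z) (at z within {-1..1})"
      unfolding E_def E'_def by (auto intro!: derivative_eq_intros simp: algebra_simps)
    define u where "u = \<phi>1 z - \<phi>2 z"
    define w where "w = \<psi>1 z - \<psi>2 z"
    have "E' z = 2 * u * w + 2 * p1 z * w * u + 2 * w * (r * \<phi>2 z)"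
      using shift[OF z] unfolding E'_def u_def w_def by (simp add: algebra_simps)
    also have "\<dots> \<le> (u^2 + w^2) + M * (w^2 + u^2) + (w^2 + (r * \<phi>2 z)^2)"
      using two_mult_le_sum_squares[of u w] abs_two_mult_mult_le[OF M[OF z], of w u]
        two_mult_le_sum_squares[of w "r * \<phi>2 z"]
      by (simp add: algebra_simps abs_le_iff)
    also have "(r * \<phi>2 z)^2 \<le> c"
      unfolding c_def power_mult_distrib using B[OF z]
      by (intro mult_left_mono) (auto simp: abs_le_square_iff[symmetric])
    also have "(u^2 + w^2) + M * (w^2 + u^2) + (w^2 + c) \<le> K * E z + c"
      unfolding K_def E_def u_def[symmetric] w_def[symmetric]
      by (simp add: algebra_simps)
    finally show "E' z \<le> K * E z + c"
      by simp
  qed (use x in auto)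
  moreover have "E (-1) = 0"
    using sol1 sol2 unfolding shooting_solution_def E_def by simp
  moreover have "c/K \<ge> 0"
    using c K by simp
  ultimately have "E x \<le> c/K * exp (K * (x + 1))"
    by (simp add: algebra_simps)
  also have "\<dots> \<le> c/K * exp (K * 2)"
    using x K c by (intro mult_left_mono exp_le_cancel_iff[THEN iffD2]) auto
  also have "\<dots> \<le> c * exp (K * 2)"
    using K c mult_left_mono[of 1 K "c * exp (K * 2)"] by (simp add: divide_le_eq)
  also have "\<dots> = (\<bar>r\<bar> * B * exp K)^2"
    unfolding c_def by (simp add: power2_eq_square exp_add[symmetric] algebra_simps)
  finally have "(\<phi>1 x - \<phi>2 x)^2 \<le> (\<bar>r\<bar> * B * exp K)^2"
    unfolding E_def using zero_le_power2[of "\<psi>1 x - \<psi>2 x"] by linarith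
  then show ?thesis
    unfolding K_def using B0 by (simp add: abs_le_square_iff[symmetric])
qed

lemma deriv_nonneg_at_left_end_of_positivity:
  fixes f :: "real \<Rightarrow> real"
  assumes "(f has_real_derivative D) (at a within S)" and "f a = 0"
    and "a < c" and "{a..c} \<subseteq> S" and pos: "\<And>y. y \<in> {a<..c} \<Longrightarrow> f y > 0"
  shows "D \<ge> 0"
proof (rule ccontr)
  assume "\<not> D \<ge> 0"
  then obtain d where "d > 0" and d: "\<And>h. h > 0 \<Longrightarrow> a + h \<in> S \<Longrightarrow> h < d \<Longrightarrow> f a > f (a + h)"
    using has_real_derivative_neg_dec_right[OF assms(1)] by force
  define h where "h = min (d/2) (c - a)"
  have "h > 0" "h < d" "a + h \<le> c"
    using \<open>d > 0\<close> \<open>a < c\<close> unfolding h_def by auto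
  moreover have "a + h \<in> S"
    using assms(4) \<open>h > 0\<close> \<open>a + h \<le> c\<close> by auto
  ultimately show False
    using d[of h] pos[of "a + h"] assms(2) by auto
qed

lemma deriv_nonpos_at_right_end_of_positivity:
  fixes f :: "real \<Rightarrow> real"
  assumes "(f has_real_derivative D) (at b within S)" and "f b = 0"
    and "c < b" and "{c..b} \<subseteq> S" and pos: "\<And>y. y \<in> {c..<b} \<Longrightarrow> f y > 0"
  shows "D \<le> 0"
proof (rule ccontr)
  assume "\<not> D \<le> 0"
  then obtain d where "d > 0" and d: "\<And>h. h > 0 \<Longrightarrow> b - h \<in> S \<Longrightarrow> h < d \<Longrightarrow> f (b - h) < f b"
    using has_real_derivative_pos_inc_left[OF assms(1)] by force
  define h where "h = min (d/2) (b - c)"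
  have "h > 0" "h < d" "c \<le> b - h"
    using \<open>d > 0\<close> \<open>c < b\<close> unfolding h_def by auto
  moreover have "b - h \<in> S"
    using assms(4) \<open>h > 0\<close> \<open>c \<le> b - h\<close> by auto
  ultimately show False
    using d[of h] pos[of "b - h"] assms(2) by auto
qed

text \<open>Sturm comparison: the Wronskian \<open>\<psi>' \<phi> - \<psi> \<phi>'\<close> has derivative \<open>(l - m) \<psi> \<phi>\<close>; on a
  maximal interval \<open>(a,b)\<close> where \<open>\<psi> > 0\<close> it is \<open>\<ge> 0\<close> at \<open>a\<close> and \<open>\<le> 0\<close> at \<open>b\<close>, so \<open>l > m\<close>
  is impossible.\<close>

lemma sturm_comparison:
  fixes \<phi> \<phi>' \<psi> \<psi>' \<psi>'' q :: "real \<Rightarrow> real"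
  assumes \<phi>': "\<And>x. x \<in> {-1..1} \<Longrightarrow> (\<phi> has_real_derivative \<phi>' x) (at x within {-1..1})"
    and \<phi>'': "\<And>x. x \<in> {-1..1} \<Longrightarrow> (\<phi>' has_real_derivative (q x - l) * \<phi> x) (at x within {-1..1})"
    and \<phi>_pos: "\<And>x. x \<in> {-1<..<1} \<Longrightarrow> \<phi> x > 0" and \<phi>_boundary: "\<phi> (-1) = 0" "\<phi> 1 = 0"
    and \<psi>': "\<And>x. x \<in> {-1..1} \<Longrightarrow> (\<psi> has_real_derivative \<psi>' x) (at x within {-1..1})"
    and \<psi>'': "\<And>x. x \<in> {-1..1} \<Longrightarrow> (\<psi>' has_real_derivative (q x - m) * \<psi> x) (at x within {-1..1})"
    and \<psi>_boundary: "\<psi> (-1) = 0" "\<psi> 1 = 0"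
    and x0: "x0 \<in> {-1..1}" "\<psi> x0 > 0"
  shows "l \<le> m"
proof (rule ccontr)
  assume "\<not> l \<le> m"
  have \<phi>_nonneg: "\<phi> x \<ge> 0" if "x \<in> {-1..1}" for x
    using \<phi>_pos[of x] \<phi>_boundary that by (cases "x = -1 \<or> x = 1") (auto simp: less_eq_real_def)
  have \<psi>: "continuous_on {-1..1} \<psi>"
    using \<psi>' by (rule DERIV_continuous_on)
  obtain a where a: "a \<in> {-1..x0}" "\<psi> a = 0" "\<forall>y\<in>{a<..x0}. \<psi> y > 0"
    using last_zero[of "-1" x0 \<psi>] continuous_on_subset[OF \<psi>, of "{-1..x0}"] x0 \<psi>_boundary by force
  obtain b where b: "b \<in> {x0..1}" "\<psi> b = 0" "\<forall>y\<in>{x0..<b}. \<psi> y > 0"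
    using first_zero[of x0 1 \<psi>] continuous_on_subset[OF \<psi>, of "{x0..1}"] x0 \<psi>_boundary by force
  have "a < x0"
    using a x0 by (cases "a = x0") auto
  have "x0 < b"
    using b x0 by (cases "b = x0") auto
  have \<psi>_pos: "\<psi> y > 0" if "a < y" "y < b" for y
    using a(3) b(3) that by (cases "y \<le> x0") auto
  define W where "W x = \<psi>' x * \<phi> x - \<psi> x * \<phi>' x" for x
  have W': "(W has_real_derivative (l - m) * \<psi> x * \<phi> x) (at x within {-1..1})" if "x \<in> {-1..1}" for x
  proof -
    have "(W has_real_derivative (q x - m) * \<psi> x * \<phi> x + \<psi>' x * \<phi>' x - (\<psi>' x * \<phi>' x + \<psi> x * ((q x - l) * \<phi> x)))
        (at x within {-1..1})"
      unfolding W_def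
      by (rule derivative_eq_intros \<phi>'[OF that] \<phi>''[OF that] \<psi>'[OF that] \<psi>''[OF that] refl | simp)+
    then show ?thesis
      by (simp add: algebra_simps)
  qed
  have "W a < W b"
  proof (rule DERIV_pos_imp_increasing_open[of a b W])
    show "a < b"
      using \<open>a < x0\<close> \<open>x0 < b\<close> by simp
    show "continuous_on {a..b} W"
      by (rule continuous_on_subset[OF DERIV_continuous_on[OF W']]) (use a b x0 in auto)
    fix z
    assume z: "a < z" "z < b"
    then have "-1 < z" "z < 1"
      using a b by auto
    then have "(W has_real_derivative (l - m) * \<psi> z * \<phi> z) (at z)"
      by (intro has_real_derivative_at_of_within_Icc[OF W'[of z]]) auto
    moreover have "(l - m) * \<psi> z * \<phi> z > 0"
      using \<open>\<not> l \<le> m\<close> \<psi>_pos[OF z] \<phi>_pos[of z] \<open>-1 < z\<close> \<open>z < 1\<close> by simp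
    ultimately show "\<exists>y. (W has_real_derivative y) (at z) \<and> y > 0"
      by blast
  qed
  moreover have "\<psi>' a \<ge> 0"
    by (rule deriv_nonneg_at_left_end_of_positivity[OF \<psi>'[of a] a(2) \<open>a < x0\<close>]) (use a x0 in auto)
  then have "W a \<ge> 0"
    unfolding W_def using a \<phi>_nonneg[of a] x0 by simp
  moreover have "\<psi>' b \<le> 0"
    by (rule deriv_nonpos_at_right_end_of_positivity[OF \<psi>'[of b] b(2) \<open>x0 < b\<close>]) (use b x0 in auto)
  then have "W b \<le> 0"
    unfolding W_def using b \<phi>_nonneg[of b] x0 by (simp add: mult_nonpos_nonneg)
  ultimately show False
    by simp
qed

locale dirichlet_shooting =
  fixes \<gamma> :: real and n :: nat
  assumes gamma_pos: "\<gamma> > 0"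
begin

definition q :: "real \<Rightarrow> real" where
  "q x = (real n * pi)^2 * \<bar>x\<bar> powr (2 * \<gamma>)"

text \<open>The first eigenvalue lies in \<open>[0, lmax]\<close>, since \<open>Phi lmax\<close> oscillates faster than
  \<open>sin (\<pi> (x + 1))\<close>.\<close>

definition lmax :: real where
  "lmax = (real n * pi)^2 + pi^2"

definition sol_bound :: real where
  "sol_bound = exp (1 + lmax)"

definition lip :: real where
  "lip = sol_bound * exp (2 + lmax)"

definition \<delta> :: real where
  "\<delta> = 1 / (2 * lmax * sol_bound)"

definition shooting_pair :: "real \<Rightarrow> (real \<Rightarrow> real) \<times> (real \<Rightarrow> real)" where
  "shooting_pair l = (SOME pr. shooting_solution (\<lambda>x. q x - l) (fst pr) (snd pr))"

definition Phi :: "real \<Rightarrow> real \<Rightarrow> real" where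
  "Phi l = fst (shooting_pair l)"

definition Psi :: "real \<Rightarrow> real \<Rightarrow> real" where
  "Psi l = snd (shooting_pair l)"

text \<open>\<open>Phi l\<close> is positive on \<open>(-1, -1 + \<delta>]\<close> for every \<open>l \<in> [0, lmax]\<close>, so the sign of its
  minimum over the rest of the interval detects a zero in \<open>(-1, 1]\<close>.\<close>

definition min_Phi :: "real \<Rightarrow> real" where
  "min_Phi l = (INF x\<in>{-1+\<delta>..1}. Phi l x)"

lemma q_continuous: "continuous_on {-1..1} q"
  unfolding q_def using gamma_pos by (intro continuous_intros continuous_on_powr') auto

lemma q_bounds:
  assumes "x \<in> {-1..1}"
  shows "0 \<le> q x" "q x \<le> (real n * pi)^2"
proof -
  have "\<bar>x\<bar> powr (2 * \<gamma>) \<le> 1"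
    by (rule powr_le1) (use assms gamma_pos in auto)
  then show "0 \<le> q x" "q x \<le> (real n * pi)^2"
    unfolding q_def using mult_left_mono[of "\<bar>x\<bar> powr (2 * \<gamma>)" 1 "(real n * pi)^2"] by auto
qed

lemma constants_pos: "lmax > 1" "sol_bound \<ge> 1" "lmax * sol_bound \<ge> 1" "lip > 0"
proof -
  have "pi^2 > 1"
    using pi_gt3 by (intro one_less_power) auto
  then show lmax: "lmax > 1"
    unfolding lmax_def using zero_le_power2[of "real n * pi"] by linarith
  then show sol_bound: "sol_bound \<ge> 1"
    unfolding sol_bound_def by simp
  show "lmax * sol_bound \<ge> 1"
    using mult_mono[of 1 lmax 1 sol_bound] lmax sol_bound by simp
  show "lip > 0"
    unfolding lip_def sol_bound_def by simp
qed

lemma delta_bounds: "\<delta> > 0" "\<delta> \<le> 1/2"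
  unfolding \<delta>_def using constants_pos by (simp_all add: field_simps)

lemma abs_q_minus_le:
  assumes "l \<in> {0..lmax}" "x \<in> {-1..1}"
  shows "\<bar>q x - l\<bar> \<le> lmax"
  using q_bounds[OF assms(2)] assms(1) zero_le_power2[of pi]
  unfolding lmax_def abs_le_iff atLeastAtMost_iff by linarith

lemma shooting_solution_Phi_Psi: "shooting_solution (\<lambda>x. q x - l) (Phi l) (Psi l)"
proof -
  have "continuous_on {-1..1} (\<lambda>x. q x - l)"
    using q_continuous by (intro continuous_intros)
  then obtain \<phi> \<psi> where "shooting_solution (\<lambda>x. q x - l) \<phi> \<psi>"
    using shooting_solution_exists by blast
  then have "\<exists>pr. shooting_solution (\<lambda>x. q x - l) (fst pr) (snd pr)"
    by (intro exI[of _ "(\<phi>, \<psi>)"]) simp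
  then show ?thesis
    unfolding Phi_def Psi_def shooting_pair_def by (rule someI_ex)
qed

lemma Phi_Psi:
  shows Phi_left: "Phi l (-1) = 0" and Psi_left: "Psi l (-1) = 1"
    and Phi_deriv: "x \<in> {-1..1} \<Longrightarrow> (Phi l has_real_derivative Psi l x) (at x within {-1..1})"
    and Psi_deriv: "x \<in> {-1..1} \<Longrightarrow> (Psi l has_real_derivative (q x - l) * Phi l x) (at x within {-1..1})"
  using shooting_solution_Phi_Psi[of l] unfolding shooting_solution_def by auto

lemma Phi_continuous: "continuous_on {-1..1} (Phi l)"
  using Phi_deriv by (rule DERIV_continuous_on)

lemma Phi_Psi_bound:
  assumes "l \<in> {0..lmax}" "x \<in> {-1..1}"
  shows "\<bar>Phi l x\<bar> \<le> sol_bound" "\<bar>Psi l x\<bar> \<le> sol_bound"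
  using shooting_solution_bound[OF shooting_solution_Phi_Psi abs_q_minus_le[OF assms(1)] assms(2)]
  unfolding sol_bound_def by auto

lemma Phi_lipschitz:
  assumes "l \<in> {0..lmax}" "m \<in> {0..lmax}" "x \<in> {-1..1}"
  shows "\<bar>Phi l x - Phi m x\<bar> \<le> lip * \<bar>l - m\<bar>"
proof -
  have "\<bar>Phi l x - Phi m x\<bar> \<le> \<bar>m - l\<bar> * sol_bound * exp (2 + lmax)"
    by (rule shooting_solution_diff_bound[OF shooting_solution_Phi_Psi shooting_solution_Phi_Psi
          abs_q_minus_le[OF assms(1)] Phi_Psi_bound(1)[OF assms(2)] _ assms(3)]) simp_all
  then show ?thesis
    unfolding lip_def by (simp add: abs_minus_commute algebra_simps)
qed

lemma Phi_ge_near_left: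
  assumes l: "l \<in> {0..lmax}" and x: "x \<in> {-1..-1+\<delta>}"
  shows "Phi l x \<ge> (x + 1) / 2"
proof -
  have Psi_ge: "Psi l y \<ge> 1 - lmax * sol_bound * (y + 1)" if y: "y \<in> {-1..1}" for y
  proof -
    have "Psi l (-1) + lmax * sol_bound * (-1) \<le> Psi l y + lmax * sol_bound * y"
    proof (rule nondecreasing_of_deriv_nonneg_within[where f = "\<lambda>y. Psi l y + lmax * sol_bound * y"])
      fix z :: real
      assume z: "z \<in> {-1..1}"
      show "((\<lambda>y. Psi l y + lmax * sol_bound * y) has_real_derivative (q z - l) * Phi l z + lmax * sol_bound)
          (at z within {-1..1})"
        by (rule derivative_eq_intros Psi_deriv[OF z] refl | simp)+
      have "\<bar>(q z - l) * Phi l z\<bar> \<le> lmax * sol_bound"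
        unfolding abs_mult by (rule mult_mono) (use abs_q_minus_le[OF l z] Phi_Psi_bound[OF l z] in auto)
      then show "(q z - l) * Phi l z + lmax * sol_bound \<ge> 0"
        by linarith
    qed (use y in auto)
    then show ?thesis
      using Psi_left[of l] by (simp add: algebra_simps)
  qed
  have "Phi l (-1) - (-1) / 2 \<le> Phi l x - x / 2"
  proof (rule nondecreasing_of_deriv_nonneg_within[where f = "\<lambda>y. Phi l y - y / 2" and b = "-1+\<delta>"])
    fix z :: real
    assume z: "z \<in> {-1..-1+\<delta>}"
    then have z1: "z \<in> {-1..1}"
      using delta_bounds by auto
    show "((\<lambda>y. Phi l y - y / 2) has_real_derivative Psi l z - 1/2) (at z within {-1..1})"
      by (rule derivative_eq_intros Phi_deriv[OF z1] refl | simp)+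
    have "lmax * sol_bound * (z + 1) \<le> lmax * sol_bound * \<delta>"
      using z constants_pos by (intro mult_left_mono) auto
    also have "\<dots> = 1/2"
      unfolding \<delta>_def using constants_pos by simp
    finally show "Psi l z - 1/2 \<ge> 0"
      using Psi_ge[OF z1] by linarith
  qed (use x delta_bounds in auto)
  then show ?thesis
    using Phi_left[of l] by simp
qed

lemma Phi_pos_near_left:
  assumes "l \<in> {0..lmax}" "x \<in> {-1<..-1+\<delta>}"
  shows "Phi l x > 0"
  using Phi_ge_near_left[OF assms(1), of x] assms(2) by auto

lemma min_Phi_le:
  assumes "y \<in> {-1+\<delta>..1}"
  shows "min_Phi l \<le> Phi l y"
proof -
  have "{-1+\<delta>..1} \<subseteq> {-1..1}"
    using delta_bounds by auto
  then have "bounded (Phi l ` {-1+\<delta>..1})"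
    by (intro compact_imp_bounded compact_continuous_image continuous_on_subset[OF Phi_continuous]) auto
  then show ?thesis
    unfolding min_Phi_def using assms by (intro cINF_lower bounded_imp_bdd_below)
qed

lemma min_Phi_attained: "\<exists>x\<in>{-1+\<delta>..1}. min_Phi l = Phi l x"
proof -
  have "{-1+\<delta>..1} \<noteq> {}" "{-1+\<delta>..1} \<subseteq> {-1..1}"
    using delta_bounds by auto
  then obtain x where x: "x \<in> {-1+\<delta>..1}" "\<forall>y\<in>{-1+\<delta>..1}. Phi l x \<le> Phi l y"
    using continuous_attains_inf[OF compact_Icc _ continuous_on_subset[OF Phi_continuous]] by blast
  moreover have "min_Phi l = Phi l x"
    unfolding min_Phi_def by (rule cInf_eq_minimum) (use x in auto)
  ultimately show ?thesis
    by blast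
qed

lemma min_Phi_continuous: "continuous_on {0..lmax} min_Phi"
proof (rule lipschitz_on_continuous_on[of lip], rule lipschitz_onI)
  have le: "min_Phi l \<le> min_Phi m + lip * \<bar>l - m\<bar>" if "l \<in> {0..lmax}" "m \<in> {0..lmax}" for l m
  proof -
    obtain x where x: "x \<in> {-1+\<delta>..1}" "min_Phi m = Phi m x"
      using min_Phi_attained by blast
    then have "x \<in> {-1..1}"
      using delta_bounds by auto
    have "min_Phi l \<le> Phi l x"
      using min_Phi_le[OF x(1)] .
    also have "\<dots> \<le> Phi m x + lip * \<bar>l - m\<bar>"
      using Phi_lipschitz[OF that \<open>x \<in> {-1..1}\<close>] by linarith
    finally show ?thesis
      using x by simp
  qed
  fix l m
  assume "l \<in> {0..lmax}" "m \<in> {0..lmax}"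
  then show "dist (min_Phi l) (min_Phi m) \<le> lip * dist l m"
    using le[of l m] le[of m l] by (simp add: dist_real_def abs_minus_commute)
qed (use constants_pos in auto)


lemma Phi_zero_ge_of_nonneg:
  assumes z: "z \<in> {-1..1}" and nonneg: "\<And>y. y \<in> {-1..z} \<Longrightarrow> Phi 0 y \<ge> 0"
  shows "Phi 0 z \<ge> z + 1"
proof -
  have Psi_ge: "Psi 0 y \<ge> 1" if y: "y \<in> {-1..z}" for y
  proof -
    have "Psi 0 (-1) \<le> Psi 0 y"
    proof (rule nondecreasing_of_deriv_nonneg_within[where f = "Psi 0" and S = "{-1..1}" and b = z])
      fix w
      assume w: "w \<in> {-1..z}"
      then have w1: "w \<in> {-1..1}"
        using z by auto
      show "(Psi 0 has_real_derivative (q w - 0) * Phi 0 w) (at w within {-1..1})"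
        by (rule Psi_deriv[OF w1])
      show "(q w - 0) * Phi 0 w \<ge> 0"
        using q_bounds(1)[OF w1] nonneg[OF w] by simp
    qed (use y z in auto)
    then show ?thesis
      using Psi_left by simp
  qed
  have "Phi 0 (-1) - (-1) \<le> Phi 0 z - z"
  proof (rule nondecreasing_of_deriv_nonneg_within[where f = "\<lambda>y. Phi 0 y - y" and S = "{-1..1}" and b = z])
    fix w
    assume w: "w \<in> {-1..z}"
    then have w1: "w \<in> {-1..1}"
      using z by auto
    show "((\<lambda>y. Phi 0 y - y) has_real_derivative Psi 0 w - 1) (at w within {-1..1})"
      by (rule derivative_eq_intros Phi_deriv[OF w1] refl | simp)+
    show "Psi 0 w - 1 \<ge> 0"
      using Psi_ge[OF w] by simp
  qed (use z in auto)
  then show ?thesis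
    using Phi_left by simp
qed

lemma min_Phi_zero_pos: "min_Phi 0 > 0"
proof -
  have l0: "(0::real) \<in> {0..lmax}"
    using constants_pos by auto
  have "Phi 0 x > 0" if x: "x \<in> {-1+\<delta>..1}" for x
  proof (rule ccontr)
    assume "\<not> Phi 0 x > 0"
    moreover have "Phi 0 (-1+\<delta>) > 0"
      using Phi_pos_near_left[OF l0, of "-1+\<delta>"] delta_bounds by auto
    moreover have "continuous_on {-1+\<delta>..x} (Phi 0)"
      by (rule continuous_on_subset[OF Phi_continuous]) (use x delta_bounds in auto)
    ultimately obtain z where z: "z \<in> {-1+\<delta>..x}" "Phi 0 z = 0" "\<forall>y\<in>{-1+\<delta>..<z}. Phi 0 y > 0"
      using first_zero[of "-1+\<delta>" x "Phi 0"] x by auto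
    have z1: "z \<in> {-1..1}"
      using z x delta_bounds by auto
    have "Phi 0 y \<ge> 0" if y: "y \<in> {-1..z}" for y
    proof (cases "y \<le> -1+\<delta>")
      case True
      then show ?thesis
        using Phi_ge_near_left[OF l0, of y] y by auto
    next
      case False
      then show ?thesis
        using z(2) z(3)[rule_format, of y] y by (cases "y = z") auto
    qed
    then have "Phi 0 z \<ge> z + 1"
      by (rule Phi_zero_ge_of_nonneg[OF z1])
    then show False
      using z delta_bounds by auto
  qed
  moreover obtain x where "x \<in> {-1+\<delta>..1}" "min_Phi 0 = Phi 0 x"
    using min_Phi_attained by blast
  ultimately show ?thesis
    by simp
qed

text \<open>On \<open>[-1,0]\<close> compare \<open>Phi lmax\<close> with \<open>sin (\<pi> (x + 1))\<close>, a solution of \<open>u'' = -\<pi>\<^sup>2 u\<close>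
  while \<open>q - lmax \<le> -\<pi>\<^sup>2\<close>: if \<open>Phi lmax\<close> stayed positive, their Wronskian would
  be nonincreasing from \<open>0\<close>, yet it equals \<open>\<pi> Phi lmax 0 > 0\<close> at \<open>0\<close>.\<close>

lemma min_Phi_lmax_nonpos: "min_Phi lmax \<le> 0"
proof (rule ccontr)
  assume "\<not> min_Phi lmax \<le> 0"
  have l: "lmax \<in> {0..lmax}"
    using constants_pos by auto
  have pos: "Phi lmax y > 0" if "y \<in> {-1<..1}" for y
  proof (cases "y \<le> -1+\<delta>")
    case True
    then show ?thesis
      using Phi_pos_near_left[OF l, of y] that by auto
  next
    case False
    then have "y \<in> {-1+\<delta>..1}"
      using that by auto
    then show ?thesis
      using min_Phi_le[of y lmax] \<open>\<not> min_Phi lmax \<le> 0\<close> by simp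
  qed
  define W where "W y = Psi lmax y * sin (pi * (y + 1)) - Phi lmax y * (pi * cos (pi * (y + 1)))" for y
  have "- W (-1) \<le> - W 0"
  proof (rule nondecreasing_of_deriv_nonneg_within[where f = "\<lambda>y. - W y" and S = "{-1..1}" and a = "-1" and b = 0])
    fix z :: real
    assume z: "z \<in> {-1..0}"
    then have z1: "z \<in> {-1..1}"
      by auto
    have "((\<lambda>y. - W y) has_real_derivative
        - ((q z - lmax) * Phi lmax z * sin (pi * (z + 1)) + Psi lmax z * (cos (pi * (z + 1)) * pi)
           - (Psi lmax z * (pi * cos (pi * (z + 1))) + Phi lmax z * (pi * (- sin (pi * (z + 1)) * pi)))))
        (at z within {-1..1})"
      unfolding W_def
      by (rule derivative_eq_intros Phi_deriv[OF z1] Psi_deriv[OF z1] refl | simp)+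
    then show "((\<lambda>y. - W y) has_real_derivative - ((q z - lmax + pi^2) * Phi lmax z * sin (pi * (z + 1))))
        (at z within {-1..1})"
      by (simp add: algebra_simps power2_eq_square)
    have "q z - lmax + pi^2 \<le> 0"
      using q_bounds(2)[OF z1] unfolding lmax_def by simp
    moreover have "Phi lmax z \<ge> 0"
      using pos[of z] Phi_left[of lmax] z by (cases "z = -1") (auto simp: less_imp_le)
    moreover have "sin (pi * (z + 1)) \<ge> 0"
      using z by (intro sin_ge_zero) auto
    ultimately show "- ((q z - lmax + pi^2) * Phi lmax z * sin (pi * (z + 1))) \<ge> 0"
      by (simp add: mult_nonpos_nonneg mult.assoc)
  qed auto
  moreover have "W (-1) = 0" "W 0 = pi * Phi lmax 0"
    unfolding W_def using Phi_left[of lmax] by simp_all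
  moreover have "Phi lmax 0 > 0"
    using pos[of 0] by simp
  ultimately show False
    by (smt (verit) pi_gt_zero mult_pos_pos)
qed


definition l1 :: real where
  "l1 = Inf {l\<in>{0..lmax}. min_Phi l \<le> 0}"

lemma l1_mem: "l1 \<in> {0..lmax}" "min_Phi l1 \<le> 0"
  and l1_le: "l \<in> {0..lmax} \<Longrightarrow> min_Phi l \<le> 0 \<Longrightarrow> l1 \<le> l"
proof -
  define S where "S = {l\<in>{0..lmax}. min_Phi l \<le> 0}"
  have "closed S"
  proof -
    have "closed ({0..lmax} \<inter> min_Phi -` {..0})"
      by (rule continuous_closed_preimage[OF min_Phi_continuous]) auto
    moreover have "{0..lmax} \<inter> min_Phi -` {..0} = S"
      unfolding S_def by auto
    ultimately show ?thesis
      by simp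
  qed
  moreover have "S \<noteq> {}"
    unfolding S_def using min_Phi_lmax_nonpos constants_pos by force
  moreover have "bdd_below S"
    unfolding S_def by (rule bdd_belowI[of _ 0]) auto
  ultimately have "l1 \<in> S"
    unfolding l1_def S_def[symmetric] by (rule closed_contains_Inf[rotated -1])
  then show "l1 \<in> {0..lmax}" "min_Phi l1 \<le> 0"
    unfolding S_def by auto
  show "l \<in> {0..lmax} \<Longrightarrow> min_Phi l \<le> 0 \<Longrightarrow> l1 \<le> l"
    unfolding l1_def using \<open>bdd_below S\<close> unfolding S_def by (intro cInf_lower) auto
qed

lemma l1_pos: "l1 > 0"
  using l1_mem min_Phi_zero_pos by (cases "l1 = 0") auto

lemma Phi_pos_below_l1:
  assumes l: "l \<in> {0..<l1}" and x: "x \<in> {-1<..1}"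
  shows "Phi l x > 0"
proof -
  have l0: "l \<in> {0..lmax}"
    using l l1_mem by auto
  show ?thesis
  proof (cases "x \<le> -1+\<delta>")
    case True
    then show ?thesis
      using Phi_pos_near_left[OF l0, of x] x by auto
  next
    case False
    then have "x \<in> {-1+\<delta>..1}"
      using x by auto
    moreover have "min_Phi l > 0"
      using l1_le[OF l0] l by force
    ultimately show ?thesis
      using min_Phi_le[of x l] by simp
  qed
qed

text \<open>\<open>Phi l1\<close> is a limit of the positive functions \<open>Phi l\<close>, \<open>l < l1\<close>.\<close>

lemma Phi_l1_nonneg:
  assumes x: "x \<in> {-1..1}"
  shows "Phi l1 x \<ge> 0"
proof (cases "x = -1")
  case True
  then show ?thesis
    using Phi_left by simp
next
  case False
  show ?thesis
  proof (rule ccontr)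
    assume "\<not> Phi l1 x \<ge> 0"
    define t where "t = min l1 (- Phi l1 x / (2 * lip))"
    have "- Phi l1 x / (2 * lip) > 0"
      using \<open>\<not> Phi l1 x \<ge> 0\<close> constants_pos by (intro divide_pos_pos) auto
    then have t: "t > 0" "t \<le> l1" "t \<le> - Phi l1 x / (2 * lip)"
      unfolding t_def using l1_pos by auto
    then have l: "l1 - t \<in> {0..<l1}"
      by auto
    have "Phi (l1 - t) x > 0"
      by (rule Phi_pos_below_l1[OF l]) (use x False in auto)
    moreover have "\<bar>Phi (l1 - t) x - Phi l1 x\<bar> \<le> lip * \<bar>l1 - t - l1\<bar>"
      by (rule Phi_lipschitz) (use l l1_mem x in auto)
    moreover have "lip * t \<le> - Phi l1 x / 2"
      using mult_left_mono[OF t(3), of lip] constants_pos by (simp add: field_simps)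
    ultimately show False
      using t \<open>\<not> Phi l1 x \<ge> 0\<close> by auto
  qed
qed

text \<open>An interior zero of the nonnegative \<open>Phi l1\<close> would be a minimum, hence a double zero.\<close>

lemma Phi_l1_pos:
  assumes z: "z \<in> {-1<..<1}"
  shows "Phi l1 z > 0"
proof (rule ccontr)
  assume "\<not> Phi l1 z > 0"
  then have zero: "Phi l1 z = 0"
    using Phi_l1_nonneg[of z] z by auto
  have deriv: "(Phi l1 has_real_derivative Psi l1 z) (at z)"
    by (rule has_real_derivative_at_of_within_Icc[OF Phi_deriv]) (use z in auto)
  have min: "\<forall>y. \<bar>z - y\<bar> < min (z + 1) (1 - z) \<longrightarrow> Phi l1 z \<le> Phi l1 y"
  proof (intro allI impI)
    fix y
    assume "\<bar>z - y\<bar> < min (z + 1) (1 - z)"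
    then have "y \<in> {-1..1}"
      by (auto simp: abs_less_iff)
    then show "Phi l1 z \<le> Phi l1 y"
      using Phi_l1_nonneg zero by simp
  qed
  have "Psi l1 z = 0"
    by (rule DERIV_local_min[OF deriv _ min]) (use z in auto)
  then show False
    using shooting_solution_no_double_zero[OF shooting_solution_Phi_Psi abs_q_minus_le[OF l1_mem(1)], of z]
      z zero by auto
qed

lemma Phi_l1_right: "Phi l1 1 = 0"
proof -
  obtain x0 where x0: "x0 \<in> {-1+\<delta>..1}" "min_Phi l1 = Phi l1 x0"
    using min_Phi_attained by blast
  then have "Phi l1 x0 = 0"
    using l1_mem(2) Phi_l1_nonneg[of x0] delta_bounds by force
  moreover have "x0 > -1"
    using x0 delta_bounds by auto
  ultimately have "x0 = 1"
    using Phi_l1_pos[of x0] x0 by force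
  then show ?thesis
    using \<open>Phi l1 x0 = 0\<close> by simp
qed

lemma is_eigenvalue_l1: "is_eigenvalue \<gamma> n l1"
  unfolding is_eigenvalue_def
proof (intro exI conjI ballI)
  show "(Phi l1 has_real_derivative Psi l1 x) (at x within {-1..1})" if "x \<in> {-1..1}" for x
    using Phi_deriv[OF that] .
  show "(Psi l1 has_real_derivative (q x - l1) * Phi l1 x) (at x within {-1..1})" if "x \<in> {-1..1}" for x
    using Psi_deriv[OF that] .
  show "continuous_on {-1..1} (\<lambda>x. (q x - l1) * Phi l1 x)"
    using q_continuous Phi_continuous by (intro continuous_intros)
  show "\<exists>x\<in>{-1..1}. Phi l1 x \<noteq> 0"
    using Phi_l1_pos[of 0] by (intro bexI[of _ 0]) auto
  show "- ((q x - l1) * Phi l1 x) + (real n * pi)^2 * \<bar>x\<bar> powr (2 * \<gamma>) * Phi l1 x = l1 * Phi l1 x" for x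
    unfolding q_def by (simp add: algebra_simps)
qed (simp_all add: Phi_left Phi_l1_right)

lemma l1_le_eigenvalue:
  assumes "is_eigenvalue \<gamma> n m"
  shows "l1 \<le> m"
proof -
  obtain \<psi> \<psi>' \<psi>'' where \<psi>': "\<forall>x\<in>{-1..1}. (\<psi> has_real_derivative \<psi>' x) (at x within {-1..1})"
    and \<psi>'': "\<forall>x\<in>{-1..1}. (\<psi>' has_real_derivative \<psi>'' x) (at x within {-1..1})"
    and boundary: "\<psi> (-1) = 0" "\<psi> 1 = 0" and "\<exists>x\<in>{-1..1}. \<psi> x \<noteq> 0"
    and eq: "\<forall>x\<in>{-1..1}. - \<psi>'' x + (real n * pi)^2 * \<bar>x\<bar> powr (2 * \<gamma>) * \<psi> x = m * \<psi> x"
    using assms unfolding is_eigenvalue_def by blast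
  then obtain x0 where x0: "x0 \<in> {-1..1}" "\<psi> x0 \<noteq> 0"
    by blast
  have eq': "\<psi>'' x = (q x - m) * \<psi> x" if "x \<in> {-1..1}" for x
    using eq that unfolding q_def by (auto simp: algebra_simps)
  \<comment> \<open>Replacing \<open>\<psi>\<close> by \<open>-\<psi>\<close> if necessary, \<open>\<psi> x0 > 0\<close>.\<close>
  define s where "s = sgn (\<psi> x0)"
  show ?thesis
  proof (rule sturm_comparison[OF Phi_deriv Psi_deriv Phi_l1_pos Phi_left Phi_l1_right,
        of "\<lambda>x. s * \<psi> x" "\<lambda>x. s * \<psi>' x" m x0])
    fix x :: real
    assume x: "x \<in> {-1..1}"
    show "((\<lambda>x. s * \<psi> x) has_real_derivative s * \<psi>' x) (at x within {-1..1})"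
      using \<psi>' x by (auto intro: DERIV_cmult)
    show "((\<lambda>x. s * \<psi>' x) has_real_derivative (q x - m) * (s * \<psi> x)) (at x within {-1..1})"
    proof -
      have "(\<psi>' has_real_derivative (q x - m) * \<psi> x) (at x within {-1..1})"
        using \<psi>'' x eq'[OF x] by (metis atLeastAtMost_iff)
      from DERIV_cmult[OF this, of s] show ?thesis
        by (simp add: algebra_simps)
    qed
  next
    show "s * \<psi> x0 > 0"
      unfolding s_def using x0(2) by (cases "\<psi> x0 > 0") (auto simp: sgn_if)
  qed (use boundary x0 in auto)
qed

lemma lam_eq_l1: "lam \<gamma> n = l1"
  unfolding lam_def
  by (rule the_equality) (use is_eigenvalue_l1 l1_le_eigenvalue in \<open>auto intro: order.antisym\<close>)

end

lemma lam_pos: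
  assumes "\<gamma> > 0"
  shows "lam \<gamma> n > 0"
proof -
  interpret dirichlet_shooting \<gamma> n
    using assms by unfold_locales
  show ?thesis
    using lam_eq_l1 l1_pos by simp
qed

lemma barrier_has_derivative:
  fixes C \<mu> \<gamma> x :: real
  assumes "x > 0"
  shows "((\<lambda>x. C * exp (- \<mu> * x powr (\<gamma> + 1))) has_real_derivative
           - C * (\<mu> * (\<gamma> + 1)) * x powr \<gamma> * exp (- \<mu> * x powr (\<gamma> + 1))) (at x)"
proof -
  have power: "((\<lambda>x. x powr (\<gamma> + 1)) has_real_derivative (\<gamma> + 1) * x powr \<gamma>) (at x)"
    using has_real_derivative_powr[OF assms, of "\<gamma> + 1"] by simp
  have "((\<lambda>x. C * exp (- \<mu> * x powr (\<gamma> + 1))) has_real_derivative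
      C * (exp (- \<mu> * x powr (\<gamma> + 1)) * (- \<mu> * ((\<gamma> + 1) * x powr \<gamma>)))) (at x)"
    by (rule DERIV_cmult DERIV_exp[THEN DERIV_chain2] DERIV_cmult power)+
  then show ?thesis
    by (simp add: algebra_simps)
qed

lemma barrier_second_deriv:
  fixes C \<mu> \<gamma> x :: real
  assumes "x > 0"
  shows "deriv (deriv (\<lambda>x. C * exp (- \<mu> * x powr (\<gamma> + 1)))) x
    = C * exp (- \<mu> * x powr (\<gamma> + 1)) * ((\<mu> * (\<gamma> + 1))^2 * x powr (2 * \<gamma>) - \<mu> * (\<gamma> + 1) * \<gamma> * x powr (\<gamma> - 1))"
proof -
  define s where "s = \<mu> * (\<gamma> + 1)"
  define F where "F x = - C * s * (x powr \<gamma> * exp (- \<mu> * x powr (\<gamma> + 1)))" for x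
  have "deriv (\<lambda>x. C * exp (- \<mu> * x powr (\<gamma> + 1))) y = F y" if "y > 0" for y
    unfolding F_def s_def
    by (rule DERIV_imp_deriv[OF DERIV_cong[OF barrier_has_derivative[OF that]]]) (simp add: algebra_simps)
  then have "eventually (\<lambda>y. deriv (\<lambda>x. C * exp (- \<mu> * x powr (\<gamma> + 1))) y = F y) (nhds x)"
    using eventually_nhds_in_open[of "{0<..}" x] assms by (auto elim!: eventually_mono)
  then have "deriv (deriv (\<lambda>x. C * exp (- \<mu> * x powr (\<gamma> + 1)))) x = deriv F x"
    by (rule deriv_cong_ev) simp
  also have "\<dots> = - C * s * (\<gamma> * x powr (\<gamma> - 1) * exp (- \<mu> * x powr (\<gamma> + 1))
      + x powr \<gamma> * (exp (- \<mu> * x powr (\<gamma> + 1)) * (- \<mu> * ((\<gamma> + 1) * x powr \<gamma>))))"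
  proof (rule DERIV_imp_deriv)
    have "((\<lambda>x. x powr \<gamma>) has_real_derivative \<gamma> * x powr (\<gamma> - 1)) (at x)"
      using has_real_derivative_powr[OF assms, of \<gamma>] by simp
    moreover have "((\<lambda>x. exp (- \<mu> * x powr (\<gamma> + 1))) has_real_derivative
        exp (- \<mu> * x powr (\<gamma> + 1)) * (- \<mu> * ((\<gamma> + 1) * x powr \<gamma>))) (at x)"
      using barrier_has_derivative[OF assms, of 1 \<mu> \<gamma>] by (simp add: algebra_simps)
    ultimately have "((\<lambda>x. x powr \<gamma> * exp (- \<mu> * x powr (\<gamma> + 1))) has_real_derivative
        \<gamma> * x powr (\<gamma> - 1) * exp (- \<mu> * x powr (\<gamma> + 1))
        + x powr \<gamma> * (exp (- \<mu> * x powr (\<gamma> + 1)) * (- \<mu> * ((\<gamma> + 1) * x powr \<gamma>)))) (at x)"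
      by (rule DERIV_cong[OF DERIV_mult]) (simp add: algebra_simps)
    then show "(F has_real_derivative - C * s * (\<gamma> * x powr (\<gamma> - 1) * exp (- \<mu> * x powr (\<gamma> + 1))
        + x powr \<gamma> * (exp (- \<mu> * x powr (\<gamma> + 1)) * (- \<mu> * ((\<gamma> + 1) * x powr \<gamma>))))) (at x)"
      unfolding F_def by (rule DERIV_cmult)
  qed
  also have "\<dots> = C * exp (- \<mu> * x powr (\<gamma> + 1)) * (s^2 * x powr (2 * \<gamma>) - s * \<gamma> * x powr (\<gamma> - 1))"
  proof -
    have "x powr (2 * \<gamma>) = x powr \<gamma> * x powr \<gamma>"
      by (simp add: powr_add[symmetric])
    then show ?thesis
      unfolding s_def by (simp add: power2_eq_square algebra_simps)
  qed
  finally show ?thesis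
    unfolding s_def .
qed

lemma barrier_supersolution:
  fixes C \<mu> \<gamma> a L xn x :: real
  defines "W \<equiv> \<lambda>x. C * exp (- \<mu> * x powr (\<gamma> + 1))"
  assumes "\<gamma> \<ge> 1" and "C \<ge> 0" and "0 < xn" "xn < x"
    and s_nonneg: "0 \<le> \<mu> * (\<gamma> + 1)" and s_le: "\<mu> * (\<gamma> + 1) \<le> a"
    and threshold: "a^2 * xn powr (2 * \<gamma>) = L"
    and s_xn: "\<mu> * (\<gamma> + 1) * xn powr (\<gamma> + 1) \<le> \<gamma>"
  shows "- deriv (deriv W) x + (a^2 * x powr (2 * \<gamma>) - L) * W x \<ge> 0"
proof -
  define s where "s = \<mu> * (\<gamma> + 1)"
  have "x > 0"
    using assms by simp
  have eq: "- deriv (deriv W) x + (a^2 * x powr (2 * \<gamma>) - L) * W x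
      = W x * ((a^2 - s^2) * x powr (2 * \<gamma>) + s * \<gamma> * x powr (\<gamma> - 1) - L)"
    unfolding W_def barrier_second_deriv[OF \<open>x > 0\<close>] s_def by (simp add: algebra_simps)
  have "a^2 - s^2 \<ge> 0"
    using s_nonneg s_le unfolding s_def by (simp add: power_mono)
  then have "(a^2 - s^2) * x powr (2 * \<gamma>) \<ge> (a^2 - s^2) * xn powr (2 * \<gamma>)"
    using assms by (intro mult_left_mono powr_mono2) auto
  moreover have "s * \<gamma> * x powr (\<gamma> - 1) \<ge> s * \<gamma> * xn powr (\<gamma> - 1)"
    using assms s_nonneg unfolding s_def by (intro mult_left_mono powr_mono2) auto
  moreover have "(a^2 - s^2) * xn powr (2 * \<gamma>) + s * \<gamma> * xn powr (\<gamma> - 1) - L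
      = s * xn powr (\<gamma> - 1) * (\<gamma> - s * xn powr (\<gamma> + 1))"
  proof -
    have "xn powr (\<gamma> - 1) * xn powr (\<gamma> + 1) = xn powr (2 * \<gamma>)"
      by (simp add: powr_add[symmetric])
    then show ?thesis
      using threshold by (simp add: algebra_simps power2_eq_square)
  qed
  moreover have "s * xn powr (\<gamma> - 1) * (\<gamma> - s * xn powr (\<gamma> + 1)) \<ge> 0"
    using s_nonneg s_xn unfolding s_def by simp
  moreover have "W x \<ge> 0"
    unfolding W_def using \<open>C \<ge> 0\<close> by simp
  ultimately show ?thesis
    unfolding eq by (intro mult_nonneg_nonneg) linarith+
qed

lemma barrier_slope:
  fixes C \<mu> \<gamma> L xn :: real
  defines "W \<equiv> \<lambda>x. C * exp (- \<mu> * x powr (\<gamma> + 1))"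
  assumes "xn > 0" and "\<mu> \<noteq> 0" and "\<gamma> + 1 \<noteq> 0"
    and C_def: "C = 2 * L * exp (\<mu> * xn powr (\<gamma> + 1)) / ((\<gamma> + 1) * \<mu> * xn powr (\<gamma> - 1/2))"
  shows "deriv W xn = - 2 * L * sqrt xn"
proof -
  define s where "s = \<mu> * (\<gamma> + 1)"
  define P where "P = xn powr (\<gamma> - 1/2)"
  have "s \<noteq> 0" "P > 0"
    unfolding s_def P_def using assms by simp_all
  have "exp (\<mu> * xn powr (\<gamma> + 1)) * exp (- \<mu> * xn powr (\<gamma> + 1)) = 1"
    by (simp add: exp_add[symmetric])
  then have CE: "C * exp (- \<mu> * xn powr (\<gamma> + 1)) = 2 * L / (s * P)"
    unfolding C_def P_def[symmetric] s_def by (simp add: mult.commute mult.left_commute)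
  have "deriv W xn = - C * s * xn powr \<gamma> * exp (- \<mu> * xn powr (\<gamma> + 1))"
    unfolding W_def s_def by (rule DERIV_imp_deriv[OF barrier_has_derivative[OF \<open>xn > 0\<close>]])
  also have "\<dots> = - 2 * L * (xn powr \<gamma> / P)"
    using CE \<open>s \<noteq> 0\<close> \<open>P > 0\<close> by (simp add: field_simps)
  also have "xn powr \<gamma> / P = sqrt xn"
    unfolding P_def using \<open>xn > 0\<close> by (simp add: powr_diff[symmetric] powr_half_sqrt)
  finally show ?thesis .
qed

lemma threshold_powr_identities:
  fixes L a \<gamma> xn :: real
  assumes "L > 0" "a > 0" "\<gamma> > 0" and xn_def: "xn = (L / a^2) powr (1 / (2 * \<gamma>))"
  shows "xn > 0" "a^2 * xn powr (2 * \<gamma>) = L"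
    "(a^2 / L) powr (1/2 + 1 / (2 * \<gamma>)) * xn powr (\<gamma> + 1) = 1"
proof -
  show "xn > 0"
    unfolding xn_def using assms by simp
  have "xn powr (2 * \<gamma>) = (L / a^2) powr (1 / (2 * \<gamma>) * (2 * \<gamma>))"
    unfolding xn_def by (simp add: powr_powr)
  then show "a^2 * xn powr (2 * \<gamma>) = L"
    using assms by simp
  have "xn powr (\<gamma> + 1) = (L / a^2) powr (1/2 + 1 / (2 * \<gamma>))"
    unfolding xn_def using assms by (simp add: powr_powr field_simps)
  then show "(a^2 / L) powr (1/2 + 1 / (2 * \<gamma>)) * xn powr (\<gamma> + 1) = 1"
    using assms by (simp add: powr_divide powr_mult[symmetric] mult.commute)
qed

lemma decay_rate_bounds:
  fixes a X \<gamma> \<mu> :: real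
  assumes "a > 0" "X > 0" "\<gamma> > 0" and "\<mu> = min (a / (\<gamma> + 1)) (\<gamma> / (\<gamma> + 1) * X)"
  shows "\<mu> > 0" "\<mu> * (\<gamma> + 1) \<le> a" "\<mu> * (\<gamma> + 1) \<le> \<gamma> * X"
proof -
  have "\<mu> > 0" "\<mu> \<le> a / (\<gamma> + 1)" "\<mu> \<le> \<gamma> * X / (\<gamma> + 1)"
    using assms by auto
  then show "\<mu> > 0" "\<mu> * (\<gamma> + 1) \<le> a" "\<mu> * (\<gamma> + 1) \<le> \<gamma> * X"
    using \<open>\<gamma> > 0\<close> by (simp_all add: pos_le_divide_eq)
qed

theorem mainTheorem9:
  fixes \<gamma> :: real and n :: nat and xn \<mu> C :: real and W :: "real \<Rightarrow> real"
  assumes "\<gamma> \<ge> 1" and "n \<ge> 1"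
    and xn_def: "xn = (lam \<gamma> n / (real n * pi)^2) powr (1 / (2 * \<gamma>))"
    and "xn < 1"
    and mu_def: "\<mu> = min (real n * pi / (\<gamma> + 1))
                 (\<gamma> / (\<gamma> + 1) * (((real n * pi)^2 / lam \<gamma> n) powr (1/2 + 1 / (2 * \<gamma>))))"
    and C_def: "C = 2 * lam \<gamma> n * exp (\<mu> * xn powr (\<gamma> + 1)) / ((\<gamma> + 1) * \<mu> * xn powr (\<gamma> - 1/2))"
    and W_def: "W = (\<lambda>x. C * exp (- \<mu> * x powr (\<gamma> + 1)))"
  shows "(\<forall>x\<in>{xn<..<1}. - deriv (deriv W) x + ((real n * pi)^2 * x powr (2 * \<gamma>) - lam \<gamma> n) * W x \<ge> 0)
         \<and> W 1 \<ge> 0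
         \<and> deriv W xn < - sqrt xn * lam \<gamma> n"
proof -
  \<comment> \<open>The hypothesis \<open>xn < 1\<close> only keeps the first claim from being vacuous.\<close>
  define X where "X = ((real n * pi)^2 / lam \<gamma> n) powr (1/2 + 1 / (2 * \<gamma>))"
  have L: "lam \<gamma> n > 0" and a: "real n * pi > 0" and "\<gamma> > 0"
    using lam_pos \<open>\<gamma> \<ge> 1\<close> \<open>n \<ge> 1\<close> by simp_all
  note xn = threshold_powr_identities[OF L a \<open>\<gamma> > 0\<close> xn_def]
  have "X > 0"
    unfolding X_def using L \<open>n \<ge> 1\<close> by simp
  note \<mu> = decay_rate_bounds[OF a \<open>X > 0\<close> \<open>\<gamma> > 0\<close> mu_def[folded X_def]]
  have s_xn: "\<mu> * (\<gamma> + 1) * xn powr (\<gamma> + 1) \<le> \<gamma>"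
    using xn \<mu>(3) \<open>\<gamma> \<ge> 1\<close> mult_right_mono[of "\<mu> * (\<gamma> + 1)" "\<gamma> * X" "xn powr (\<gamma> + 1)"]
    unfolding X_def by (simp add: mult.assoc)
  have "C > 0"
    unfolding C_def using L \<mu>(1) \<open>\<gamma> \<ge> 1\<close> xn by simp
  have "deriv W xn = - 2 * lam \<gamma> n * sqrt xn"
    unfolding W_def using \<open>\<gamma> \<ge> 1\<close> \<mu>(1) xn(1) by (intro barrier_slope C_def) auto
  then show ?thesis
    using barrier_supersolution[OF \<open>\<gamma> \<ge> 1\<close> less_imp_le[OF \<open>C > 0\<close>] xn(1) _ _ \<mu>(2) xn(2) s_xn]
      \<mu>(1) \<open>\<gamma> \<ge> 1\<close> \<open>C > 0\<close> L xn(1)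
    unfolding W_def by auto
qed

end
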